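(* Let $\mathcal P=(P,T,F,\lambda)$ be a labelled Petri net with finite sets of places $P$ and transitions $T$, and let $X=X_{\mathcal P}$ be the associated $(\square(\Sigma)\times\mathbb N^P)$-presheaf. Then the sub-presheaf $X_{nac}$ and, for every $d\ge1$, the sub-presheaf $X_{\le d}$ of $X$ are finitely generated. Consequently, equipped with any finite sets of start and accept elements, they are higher-dimensional automata with counters of finite type.
   Context: Fix an alphabet $\Sigma$. $\square(\Sigma)$ is the category whose objects are finite words $a_1\cdots a_n$ over $\Sigma$ ($n\ge0$) and whose morphisms $V\to U$ (with $|V|=m$, $|U|=n$) are pairs $(f,\varepsilon)$ with $f:\{1,\dots,m\}\to\{1,\dots,n\}$ strictly increasing and letter-preserving and $\varepsilon:\{1,\dots,n\}\setminus f(\{1,\dots,m\})\to\{0,1\}$; composition of $(g,\eta):W\to V$ and $(f,\varepsilon):V\to U$ is $(fg,\theta)$ with $\theta(u)=\varepsilon(u)$ for $u\notin f(V)$ and $\theta(u)=\eta(f^{-1}(u))$ otherwise. For $U=a_1\cdots a_n$, $1\le i\le n$, $\varepsilon\in\{0,1\}$, $d^\varepsilon_i:a_1\cdots a_{i-1}a_{i+1}\cdots a_n\to U$ omits position $i$ with value $\varepsilon$ there; these generate all morphisms. The monoid $\mathbb N^P$ is viewed as a one-object category, and $\square(\Sigma)\times\mathbb N^P$ is the product category (objects: words; morphisms: pairs $(\varphi,\mathsf w)$). A labelled Petri net: places $P$, transitions $T$, flow $F\subseteq(P\times T)\sqcup(T\times P)$, labelling $\lambda:T\to\Sigma$; $\mathsf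 a(t),\mathsf b(t)\in\{0,1\}^P\subseteq\mathbb N^P$ with $\mathsf a(t)_p=1$ iff $(p,t)\in F$, $\mathsf b(t)_p=1$ iff $(t,p)\in F$. $X_{\mathcal P}$ assigns to a word $U$ the set of $(t_1,\dots,t_n;\mathsf v)$ with $t_i\in T$, $\lambda(t_1)\cdots\lambda(t_n)=U$, $\mathsf v\in\mathbb N^P$, with $X[(\mathrm{id},\mathsf w)](\mathbf t;\mathsf v)=(\mathbf t;\mathsf v+\mathsf w)$, $X[(d^0_i,\mathsf w)](t_1,\dots,t_n;\mathsf v)=(t_1,\dots,t_{i-1},t_{i+1},\dots,t_n;\mathsf v+\mathsf a(t_i)+\mathsf w)$ and $X[(d^1_i,\mathsf w)](t_1,\dots,t_n;\mathsf v)=(t_1,\dots,t_{i-1},t_{i+1},\dots,t_n;\mathsf v+\mathsf b(t_i)+\mathsf w)$. $X_{nac}$ consists of the elements $(t_1,\dots,t_n;\mathsf v)$ with the $t_i$ pairwise distinct; $X_{\le d}$ of those with $n\le d$. A presheaf $Z$ on a small category $\mathcal D$ is finitely generated if $Z\cong\operatorname{colim}_{e\in\mathcal E}\mathcal D(-,G(e))$ for some finite category $\mathcal E$ and functor $G:\mathcal E\to\mathcal D$. A higher-dimensional automaton with counters is such a presheaf with sets of start and accept elements; finite type means finitely generated with finitely many start and accept elements. *)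

theory Defs
  imports Main
begin

text \<open>A morphism (f,eps) : V -> U of Box(Sigma) is encoded canonically by a list xs of length |U|:
  xs!u = None   iff u is in the image of f (f is then determined, being strictly increasing),
  xs!u = Some e iff u is not in the image and eps(u) = e (False = 0, True = 1).
  A morphism of the product category is a pair (xs, w) with w in N^P, i.e. w :: 'p => nat.\<close>

type_synonym 'p morph = "bool option list \<times> ('p \<Rightarrow> nat)"

definition dhom :: "'a list \<Rightarrow> 'a list \<Rightarrow> 'p morph set" where
  "dhom V U = {(xs, w). length xs = length U \<and>
       V = map fst (filter (\<lambda>(a, o'). o' = None) (zip U xs))}"

fun fill :: "bool option list \<Rightarrow> bool option list \<Rightarrow> bool option list" where
  "fill [] ys = []"
| "fill (Some e # xs) ys = Some e # fill xs ys"
| "fill (None # xs) (y # ys) = y # fill xs ys"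
| "fill (None # xs) [] = None # fill xs []"

text \<open>dcomp phi psi = phi o psi (first psi : W -> V, then phi : V -> U).\<close>
definition dcomp :: "'p morph \<Rightarrow> 'p morph \<Rightarrow> 'p morph" where
  "dcomp phi psi = (fill (fst phi) (fst psi), \<lambda>p. snd phi p + snd psi p)"

definition did :: "'a list \<Rightarrow> 'p morph" where
  "did U = (replicate (length U) None, \<lambda>_. 0)"

definition presheaf :: "('a list \<Rightarrow> 'x set) \<Rightarrow> ('a list \<Rightarrow> 'p morph \<Rightarrow> 'x \<Rightarrow> 'x) \<Rightarrow> bool" where
  "presheaf Z act \<longleftrightarrow>
     (\<forall>U V phi x. phi \<in> dhom V U \<and> x \<in> Z U \<longrightarrow> act U phi x \<in> Z V) \<and>
     (\<forall>U x. x \<in> Z U \<longrightarrow> act U (did U) x = x) \<and>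
     (\<forall>U V W phi psi x. phi \<in> dhom V U \<and> psi \<in> dhom W V \<and> x \<in> Z U \<longrightarrow>
         act U (dcomp phi psi) x = act V psi (act U phi x))"

definition fin_cat :: "nat set \<Rightarrow> nat set \<Rightarrow> (nat \<Rightarrow> nat) \<Rightarrow> (nat \<Rightarrow> nat) \<Rightarrow> (nat \<Rightarrow> nat)
                        \<Rightarrow> (nat \<Rightarrow> nat \<Rightarrow> nat) \<Rightarrow> bool" where
  "fin_cat Ob Ar dm cd idn cmp \<longleftrightarrow>
     finite Ob \<and> finite Ar \<and>
     (\<forall>f\<in>Ar. dm f \<in> Ob \<and> cd f \<in> Ob) \<and>
     (\<forall>e\<in>Ob. idn e \<in> Ar \<and> dm (idn e) = e \<and> cd (idn e) = e) \<and>
     (\<forall>f\<in>Ar. \<forall>g\<in>Ar. cd f = dm g \<longrightarrow>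
        cmp g f \<in> Ar \<and> dm (cmp g f) = dm f \<and> cd (cmp g f) = cd g) \<and>
     (\<forall>f\<in>Ar. cmp f (idn (dm f)) = f \<and> cmp (idn (cd f)) f = f) \<and>
     (\<forall>f\<in>Ar. \<forall>g\<in>Ar. \<forall>h\<in>Ar. cd f = dm g \<and> cd g = dm h \<longrightarrow>
        cmp h (cmp g f) = cmp (cmp h g) f)"

definition is_functor :: "nat set \<Rightarrow> nat set \<Rightarrow> (nat \<Rightarrow> nat) \<Rightarrow> (nat \<Rightarrow> nat) \<Rightarrow> (nat \<Rightarrow> nat)
                        \<Rightarrow> (nat \<Rightarrow> nat \<Rightarrow> nat) \<Rightarrow> (nat \<Rightarrow> 'a list) \<Rightarrow> (nat \<Rightarrow> 'p morph) \<Rightarrow> bool" where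
  "is_functor Ob Ar dm cd idn cmp Gob Gar \<longleftrightarrow>
     (\<forall>f\<in>Ar. Gar f \<in> dhom (Gob (dm f)) (Gob (cd f))) \<and>
     (\<forall>e\<in>Ob. Gar (idn e) = did (Gob e)) \<and>
     (\<forall>f\<in>Ar. \<forall>g\<in>Ar. cd f = dm g \<longrightarrow> Gar (cmp g f) = dcomp (Gar g) (Gar f))"

section \<open>The colimit of the representables D(-, G e), computed pointwise\<close>

definition colim_base :: "nat set \<Rightarrow> (nat \<Rightarrow> 'a list) \<Rightarrow> 'a list \<Rightarrow> (nat \<times> 'p morph) set" where
  "colim_base Ob Gob U = {(e, phi). e \<in> Ob \<and> phi \<in> dhom U (Gob e)}"

definition colim_step :: "nat set \<Rightarrow> (nat \<Rightarrow> nat) \<Rightarrow> (nat \<Rightarrow> nat) \<Rightarrow> (nat \<Rightarrow> 'a list)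
       \<Rightarrow> (nat \<Rightarrow> 'p morph) \<Rightarrow> 'a list \<Rightarrow> ((nat \<times> 'p morph) \<times> (nat \<times> 'p morph)) set" where
  "colim_step Ar dm cd Gob Gar U =
     {((dm f, phi), (cd f, dcomp (Gar f) phi)) | f phi. f \<in> Ar \<and> phi \<in> dhom U (Gob (dm f))}"

definition colim_equiv :: "nat set \<Rightarrow> nat set \<Rightarrow> (nat \<Rightarrow> nat) \<Rightarrow> (nat \<Rightarrow> nat) \<Rightarrow> (nat \<Rightarrow> 'a list)
       \<Rightarrow> (nat \<Rightarrow> 'p morph) \<Rightarrow> 'a list \<Rightarrow> ((nat \<times> 'p morph) \<times> (nat \<times> 'p morph)) set" where
  "colim_equiv Ob Ar dm cd Gob Gar U =
     Id_on (colim_base Ob Gob U) \<union>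
     (colim_step Ar dm cd Gob Gar U \<union> (colim_step Ar dm cd Gob Gar U)\<inverse>)\<^sup>+"

definition colim :: "nat set \<Rightarrow> nat set \<Rightarrow> (nat \<Rightarrow> nat) \<Rightarrow> (nat \<Rightarrow> nat) \<Rightarrow> (nat \<Rightarrow> 'a list)
       \<Rightarrow> (nat \<Rightarrow> 'p morph) \<Rightarrow> 'a list \<Rightarrow> (nat \<times> 'p morph) set set" where
  "colim Ob Ar dm cd Gob Gar U =
     colim_base Ob Gob U // colim_equiv Ob Ar dm cd Gob Gar U"

definition colim_act :: "nat set \<Rightarrow> nat set \<Rightarrow> (nat \<Rightarrow> nat) \<Rightarrow> (nat \<Rightarrow> nat) \<Rightarrow> (nat \<Rightarrow> 'a list)
       \<Rightarrow> (nat \<Rightarrow> 'p morph) \<Rightarrow> 'a list \<Rightarrow> 'p morph \<Rightarrow> (nat \<times> 'p morph) set \<Rightarrow> (nat \<times> 'p morph) set" where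
  "colim_act Ob Ar dm cd Gob Gar V psi C =
     colim_equiv Ob Ar dm cd Gob Gar V `` {(e, dcomp phi psi) | e phi. (e, phi) \<in> C}"

text \<open>Finitely generated: naturally isomorphic to colim_{e in E} D(-, G e) for a finite category E
  (objects and arrows encoded by natural numbers, w.l.o.g.) and a functor G : E -> D.\<close>
definition fin_gen :: "('a list \<Rightarrow> 'x set) \<Rightarrow> ('a list \<Rightarrow> 'p morph \<Rightarrow> 'x \<Rightarrow> 'x) \<Rightarrow> bool" where
  "fin_gen Z act \<longleftrightarrow> presheaf Z act \<and>
     (\<exists>Ob Ar dm cd idn cmp Gob Gar
        (\<theta> :: 'a list \<Rightarrow> 'x \<Rightarrow> (nat \<times> 'p morph) set).
        fin_cat Ob Ar dm cd idn cmp \<and> is_functor Ob Ar dm cd idn cmp Gob Gar \<and>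
        (\<forall>U. bij_betw (\<theta> U) (Z U) (colim Ob Ar dm cd Gob Gar U)) \<and>
        (\<forall>U V phi x. phi \<in> dhom V U \<and> x \<in> Z U \<longrightarrow>
            \<theta> V (act U phi x) = colim_act Ob Ar dm cd Gob Gar V phi (\<theta> U x)))"

definition elems :: "('a list \<Rightarrow> 'x set) \<Rightarrow> ('a list \<times> 'x) set" where
  "elems Z = Sigma UNIV Z"

definition hdac_finite_type :: "('a list \<Rightarrow> 'x set) \<Rightarrow> ('a list \<Rightarrow> 'p morph \<Rightarrow> 'x \<Rightarrow> 'x)
       \<Rightarrow> ('a list \<times> 'x) set \<Rightarrow> ('a list \<times> 'x) set \<Rightarrow> bool" where
  "hdac_finite_type Z act S A \<longleftrightarrow>
     fin_gen Z act \<and> S \<subseteq> elems Z \<and> A \<subseteq> elems Z \<and> finite S \<and> finite A"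

text \<open>Places = the finite type 'p, transitions = the finite type 't,
  flow F \<subseteq> (P x T) + (T x P), labelling lab : T -> Sigma.\<close>

definition pre_vec :: "('p \<times> 't + 't \<times> 'p) set \<Rightarrow> 't \<Rightarrow> 'p \<Rightarrow> nat" where
  "pre_vec F t p = (if Inl (p, t) \<in> F then 1 else 0)"

definition post_vec :: "('p \<times> 't + 't \<times> 'p) set \<Rightarrow> 't \<Rightarrow> 'p \<Rightarrow> nat" where
  "post_vec F t p = (if Inr (t, p) \<in> F then 1 else 0)"

definition X_P :: "('p \<times> 't + 't \<times> 'p) set \<Rightarrow> ('t \<Rightarrow> 'a) \<Rightarrow> 'a list \<Rightarrow> ('t list \<times> ('p \<Rightarrow> nat)) set" where
  "X_P F lab U = {(ts, v). map lab ts = U}"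

text \<open>Action of (xs, w) : V -> U: delete the positions not in the image, adding a(t_u) for value 0
  and b(t_u) for value 1 there, and add w. On generators (d^e_i, w) this is exactly the given formula.\<close>
definition X_act :: "('p \<times> 't + 't \<times> 'p) set \<Rightarrow> 'a list \<Rightarrow> 'p morph
       \<Rightarrow> ('t list \<times> ('p \<Rightarrow> nat)) \<Rightarrow> ('t list \<times> ('p \<Rightarrow> nat))" where
  "X_act F U phi x =
     (map fst (filter (\<lambda>(t, o'). o' = None) (zip (fst x) (fst phi))),
      \<lambda>p. snd x p + snd phi p +
          (\<Sum>u<length (fst phi). case fst phi ! u of
               None \<Rightarrow> 0
             | Some e \<Rightarrow> (if e then post_vec F (fst x ! u) p else pre_vec F (fst x ! u) p)))"

definition X_nac :: "('p \<times> 't + 't \<times> 'p) set \<Rightarrow> ('t \<Rightarrow> 'a) \<Rightarrow> 'a list \<Rightarrow> ('t list \<times> ('p \<Rightarrow> nat)) set" where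
  "X_nac F lab U = {x \<in> X_P F lab U. distinct (fst x)}"

definition X_le :: "('p \<times> 't + 't \<times> 'p) set \<Rightarrow> ('t \<Rightarrow> 'a) \<Rightarrow> nat \<Rightarrow> 'a list \<Rightarrow> ('t list \<times> ('p \<Rightarrow> nat)) set" where
  "X_le F lab d U = {x \<in> X_P F lab U. length (fst x) \<le> d}"

end

theory Submission
  imports Defs "HOL-Library.FuncSet" "HOL-Library.Sublist"
begin

text \<open>Both presheaves consist of the elements (ts, v) of X whose transition sequence ts lies in a
  finite set G closed under subsequences. Every morphism (xs, w) is the composite of the face part (xs, 0)
  with the translation (id, w), and every element (ts, v) is the translate by v of (ts, 0).
  Faces remove one transition and add at most one token per place, so for L bounding the lengths
  in G the finitely many elements with v p + |ts| \<le> L form a face-closed set E. Any element has the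
  canonical representation ((ts, 0), (id, v)) over E, and any other representation is joined to it
  by a span in the category of elements; hence the colimit of representables over the full
  subcategory of elements on E is the presheaf itself.\<close>

section \<open>Morphisms of Box(Sigma) x N^P\<close>

fun retained :: "'b list \<Rightarrow> bool option list \<Rightarrow> 'b list" where
  "retained (t # ts) (None # xs) = t # retained ts xs"
| "retained (t # ts) (Some e # xs) = retained ts xs"
| "retained _ _ = []"

fun face_weight :: "('p \<times> 't + 't \<times> 'p) set \<Rightarrow> 't list \<Rightarrow> bool option list \<Rightarrow> 'p \<Rightarrow> nat" where
  "face_weight F (t # ts) (Some e # xs) p =
     (if e then post_vec F t p else pre_vec F t p) + face_weight F ts xs p"
| "face_weight F (t # ts) (None # xs) p = face_weight F ts xs p"
| "face_weight F _ _ p = 0"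

abbreviation dom_length :: "bool option list \<Rightarrow> nat" where
  "dom_length xs \<equiv> length (filter (\<lambda>o'. o' = None) xs)"

lemma retained_conv_filter: "map fst (filter (\<lambda>(a, o'). o' = None) (zip ts xs)) = retained ts xs"
  by (induction ts xs rule: retained.induct) auto

lemma length_retained: "length ts = length xs \<Longrightarrow> length (retained ts xs) = dom_length xs"
  by (induction ts xs rule: retained.induct) auto

lemma subseq_retained: "subseq (retained ts xs) ts"
  by (induction ts xs rule: retained.induct) auto

lemma map_retained: "map f (retained ts xs) = retained (map f ts) xs"
  by (induction ts xs rule: retained.induct) auto

lemma retained_replicate_None: "length ts = n \<Longrightarrow> retained ts (replicate n None) = ts"
  by (induction ts arbitrary: n) auto

lemma face_weight_replicate_None: "face_weight F ts (replicate n None) p = 0"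
proof (induction ts arbitrary: n)
  case (Cons t ts)
  then show ?case by (cases n) auto
qed simp

lemma face_weight_add_length_retained: "face_weight F ts xs p + length (retained ts xs) \<le> length ts"
  by (induction F ts xs p rule: face_weight.induct) (auto simp: pre_vec_def post_vec_def)

lemma face_weight_conv_sum:
  assumes "length ts = length xs"
  shows "(\<Sum>u<length xs. case xs ! u of None \<Rightarrow> 0
            | Some e \<Rightarrow> (if e then post_vec F (ts ! u) p else pre_vec F (ts ! u) p))
         = face_weight F ts xs p"
  using assms
proof (induction xs arbitrary: ts)
  case (Cons x xs)
  then obtain t ts' where ts: "ts = t # ts'" and "length ts' = length xs" by (cases ts) auto
  with Cons.IH[of ts'] show ?case
    unfolding ts length_Cons sum.lessThan_Suc_shift nth_Cons_0 nth_Cons_Suc by (cases x) simp_all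
qed simp

lemma length_fill: "length (fill xs ys) = length xs"
  by (induction xs ys rule: fill.induct) auto

lemma fill_replicate_None_right: "fill xs (replicate (dom_length xs) None) = xs"
  by (induction xs) (auto split: option.splits)

lemma fill_replicate_None_left: "length ys = n \<Longrightarrow> fill (replicate n None) ys = ys"
  by (induction ys arbitrary: n) auto

lemma fill_assoc:
  "length ys = dom_length xs \<Longrightarrow> length zs = dom_length ys \<Longrightarrow>
   fill (fill xs ys) zs = fill xs (fill ys zs)"
proof (induction xs ys arbitrary: zs rule: fill.induct)
  case (3 xs y ys)
  then show ?case by (cases y; cases zs) auto
qed auto

lemma retained_fill:
  "length ts = length xs \<Longrightarrow> length ys = dom_length xs \<Longrightarrow>
   retained ts (fill xs ys) = retained (retained ts xs) ys"
proof (induction xs ys arbitrary: ts rule: fill.induct)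
  case (3 xs y ys)
  then show ?case by (cases ts; cases y) auto
qed (auto simp: length_Suc_conv)

lemma face_weight_fill:
  "length ts = length xs \<Longrightarrow> length ys = dom_length xs \<Longrightarrow>
   face_weight F ts (fill xs ys) p = face_weight F ts xs p + face_weight F (retained ts xs) ys p"
proof (induction xs ys arbitrary: ts rule: fill.induct)
  case (3 xs y ys)
  then show ?case by (cases ts; cases y) auto
qed (auto simp: length_Suc_conv)

lemma dhom_iff: "phi \<in> dhom V U \<longleftrightarrow> length (fst phi) = length U \<and> V = retained U (fst phi)"
  by (cases phi) (simp add: dhom_def retained_conv_filter)

lemma dcomp_in_dhom: "phi \<in> dhom V U \<Longrightarrow> psi \<in> dhom W V \<Longrightarrow> dcomp phi psi \<in> dhom W U"
  by (auto simp: dhom_iff dcomp_def length_fill length_retained retained_fill)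

lemma did_in_dhom: "did U \<in> dhom U U"
  by (simp add: dhom_iff did_def retained_replicate_None)

lemma dcomp_did_right: "phi \<in> dhom V U \<Longrightarrow> dcomp phi (did V) = phi"
  by (cases phi) (auto simp: dhom_iff dcomp_def did_def length_retained fill_replicate_None_right)

lemma dcomp_did_left: "phi \<in> dhom V U \<Longrightarrow> dcomp (did U) phi = phi"
  by (cases phi) (auto simp: dhom_iff dcomp_def did_def length_retained fill_replicate_None_left)

lemma dcomp_assoc:
  "phi \<in> dhom V U \<Longrightarrow> psi \<in> dhom W V \<Longrightarrow> chi \<in> dhom Y W \<Longrightarrow>
   dcomp (dcomp phi psi) chi = dcomp phi (dcomp psi chi)"
  by (auto simp: dhom_iff dcomp_def length_retained fill_assoc add.assoc)

section \<open>Colimits of representables\<close>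

lemma presheaf_act_in: "presheaf Z act \<Longrightarrow> phi \<in> dhom V U \<Longrightarrow> x \<in> Z U \<Longrightarrow> act U phi x \<in> Z V"
  unfolding presheaf_def by blast

lemma presheaf_act_dcomp:
  "presheaf Z act \<Longrightarrow> phi \<in> dhom V U \<Longrightarrow> psi \<in> dhom W V \<Longrightarrow> x \<in> Z U \<Longrightarrow>
   act U (dcomp phi psi) x = act V psi (act U phi x)"
  unfolding presheaf_def by blast

lemma presheaf_act_did: "presheaf Z act \<Longrightarrow> x \<in> Z U \<Longrightarrow> act U (did U) x = x"
  unfolding presheaf_def by blast

lemma colim_base_iff: "(e, phi) \<in> colim_base Ob Gob U \<longleftrightarrow> e \<in> Ob \<and> phi \<in> dhom U (Gob e)"
  by (simp add: colim_base_def)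

text \<open>By Yoneda, xe e is the leg of a cocone from the representables D(-, Gob e) to Z, and eval
  is the induced map from the colimit base.\<close>

locale representable_cocone =
  fixes Z :: "'a list \<Rightarrow> 'x set" and act :: "'a list \<Rightarrow> 'p morph \<Rightarrow> 'x \<Rightarrow> 'x"
    and Ob Ar :: "nat set" and dm cd idn :: "nat \<Rightarrow> nat" and cmp :: "nat \<Rightarrow> nat \<Rightarrow> nat"
    and Gob :: "nat \<Rightarrow> 'a list" and Gar :: "nat \<Rightarrow> 'p morph" and xe :: "nat \<Rightarrow> 'x"
  assumes presheaf: "presheaf Z act"
    and fin_cat: "fin_cat Ob Ar dm cd idn cmp"
    and is_functor: "is_functor Ob Ar dm cd idn cmp Gob Gar"
    and vertex_in: "e \<in> Ob \<Longrightarrow> xe e \<in> Z (Gob e)"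
    and cocone: "f \<in> Ar \<Longrightarrow> act (Gob (cd f)) (Gar f) (xe (cd f)) = xe (dm f)"
begin

definition eval :: "nat \<times> 'p morph \<Rightarrow> 'x" where
  "eval p = act (Gob (fst p)) (snd p) (xe (fst p))"

definition fibre :: "'a list \<Rightarrow> 'x \<Rightarrow> (nat \<times> 'p morph) set" where
  "fibre U z = {p \<in> colim_base Ob Gob U. eval p = z}"

lemma eval_in: "p \<in> colim_base Ob Gob U \<Longrightarrow> eval p \<in> Z U"
  by (cases p) (auto simp: eval_def colim_base_iff intro: presheaf_act_in[OF presheaf] vertex_in)

lemma dcomp_in_colim_base:
  "(e, phi) \<in> colim_base Ob Gob U \<Longrightarrow> psi \<in> dhom V U \<Longrightarrow> (e, dcomp phi psi) \<in> colim_base Ob Gob V"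
  by (auto simp: colim_base_iff intro: dcomp_in_dhom)

lemma eval_dcomp:
  "(e, phi) \<in> colim_base Ob Gob U \<Longrightarrow> psi \<in> dhom V U \<Longrightarrow>
   eval (e, dcomp phi psi) = act U psi (eval (e, phi))"
  by (auto simp: eval_def colim_base_iff intro: presheaf_act_dcomp[OF presheaf] vertex_in)

lemma colim_step_eval:
  assumes "(p, q) \<in> colim_step Ar dm cd Gob Gar U"
  shows "p \<in> colim_base Ob Gob U \<and> q \<in> colim_base Ob Gob U \<and> eval p = eval q"
proof -
  from assms obtain f phi where f: "f \<in> Ar" and phi: "phi \<in> dhom U (Gob (dm f))"
    and p: "p = (dm f, phi)" and q: "q = (cd f, dcomp (Gar f) phi)"
    unfolding colim_step_def by blast
  have ends: "dm f \<in> Ob" "cd f \<in> Ob" and Gf: "Gar f \<in> dhom (Gob (dm f)) (Gob (cd f))"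
    using f fin_cat is_functor by (auto simp: fin_cat_def is_functor_def)
  then have q_base: "q \<in> colim_base Ob Gob U"
    using phi by (simp add: q colim_base_iff dcomp_in_dhom)
  have "eval q = act (Gob (dm f)) phi (act (Gob (cd f)) (Gar f) (xe (cd f)))"
    using Gf phi ends by (simp add: q eval_def presheaf_act_dcomp[OF presheaf] vertex_in)
  also have "\<dots> = eval p"
    using f by (simp add: p eval_def cocone)
  finally show ?thesis
    using ends phi q_base by (simp add: p colim_base_iff)
qed

lemma colim_equiv_eval:
  assumes "(p, q) \<in> colim_equiv Ob Ar dm cd Gob Gar U"
  shows "p \<in> colim_base Ob Gob U \<and> q \<in> colim_base Ob Gob U \<and> eval p = eval q"
proof -
  let ?S = "colim_step Ar dm cd Gob Gar U"
  have "(p, q) \<in> (?S \<union> ?S\<inverse>)\<^sup>+ \<Longrightarrow> ?thesis"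
    by (induction rule: trancl_induct) (use colim_step_eval in fastforce)+
  with assms show ?thesis
    unfolding colim_equiv_def by blast
qed

context
  assumes eval_surj: "\<And>U z. z \<in> Z U \<Longrightarrow> \<exists>p \<in> colim_base Ob Gob U. eval p = z"
    and fibres_connected: "\<And>U p q. p \<in> colim_base Ob Gob U \<Longrightarrow> q \<in> colim_base Ob Gob U \<Longrightarrow>
            eval p = eval q \<Longrightarrow> (p, q) \<in> colim_equiv Ob Ar dm cd Gob Gar U"
begin

lemma colim_equiv_class:
  "p \<in> colim_base Ob Gob U \<Longrightarrow> colim_equiv Ob Ar dm cd Gob Gar U `` {p} = fibre U (eval p)"
  by (auto simp: fibre_def dest: colim_equiv_eval intro: fibres_connected)

lemma fibre_in_colim:
  assumes "z \<in> Z U"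
  shows "fibre U z \<in> colim Ob Ar dm cd Gob Gar U"
proof -
  obtain p where "p \<in> colim_base Ob Gob U" and "eval p = z"
    using eval_surj[OF assms] by blast
  then show ?thesis
    unfolding colim_def by (metis colim_equiv_class quotientI)
qed

lemma bij_betw_fibre: "bij_betw (fibre U) (Z U) (colim Ob Ar dm cd Gob Gar U)"
proof (rule bij_betw_imageI)
  show "inj_on (fibre U) (Z U)"
  proof (rule inj_onI)
    fix z z' assume "z \<in> Z U" and "fibre U z = fibre U z'"
    with eval_surj[of z U] show "z = z'"
      by (auto simp: fibre_def)
  qed
  show "fibre U ` Z U = colim Ob Ar dm cd Gob Gar U"
    using fibre_in_colim colim_equiv_class eval_in unfolding colim_def
    by (fastforce elim: quotientE)
qed

lemma fibre_natural:
  assumes phi: "phi \<in> dhom V U" and z: "z \<in> Z U"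
  shows "fibre V (act U phi z) = colim_act Ob Ar dm cd Gob Gar V phi (fibre U z)"
proof -
  define M where "M = {(e, dcomp a phi) | e a. (e, a) \<in> fibre U z}"
  have M_fibre: "M \<subseteq> fibre V (act U phi z)"
  proof
    fix q assume "q \<in> M"
    then obtain e a where q: "q = (e, dcomp a phi)" and "(e, a) \<in> colim_base Ob Gob U"
      and "eval (e, a) = z"
      unfolding M_def fibre_def by blast
    with phi show "q \<in> fibre V (act U phi z)"
      by (simp add: fibre_def dcomp_in_colim_base eval_dcomp)
  qed
  obtain e a where "(e, a) \<in> fibre U z"
    using eval_surj[OF z] by (auto simp: fibre_def)
  then have "M \<noteq> {}"
    unfolding M_def by blast
  have "colim_equiv Ob Ar dm cd Gob Gar V `` {p} = fibre V (act U phi z)" if "p \<in> M" for p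
  proof -
    from that M_fibre have "p \<in> colim_base Ob Gob V" and "eval p = act U phi z"
      by (auto simp: fibre_def)
    then show ?thesis using colim_equiv_class by metis
  qed
  with \<open>M \<noteq> {}\<close> have "colim_equiv Ob Ar dm cd Gob Gar V `` M = fibre V (act U phi z)"
    by blast
  then show ?thesis
    by (simp add: colim_act_def M_def)
qed

theorem fin_gen_if_fibres_connected: "fin_gen Z act"
  unfolding fin_gen_def
  using presheaf fin_cat is_functor bij_betw_fibre fibre_natural by blast

end

end

section \<open>Full subcategories of elements on finite generating sets\<close>

definition enum_set :: "'b set \<Rightarrow> nat \<Rightarrow> 'b" where
  "enum_set A = (SOME f. bij_betw f {..<card A} A)"

definition enum_index :: "'b set \<Rightarrow> 'b \<Rightarrow> nat" where
  "enum_index A = the_inv_into {..<card A} (enum_set A)"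

lemma bij_betw_enum_set:
  assumes "finite A"
  shows "bij_betw (enum_set A) {..<card A} A"
proof -
  obtain f where "bij_betw f {0..<card A} A"
    using ex_bij_betw_nat_finite[OF assms] by blast
  then show ?thesis
    unfolding enum_set_def atLeast0LessThan
    by (rule someI[where P = "\<lambda>f. bij_betw f {..<card A} A"])
qed

lemma enum_set_in: "finite A \<Longrightarrow> i < card A \<Longrightarrow> enum_set A i \<in> A"
  by (rule bij_betw_apply[OF bij_betw_enum_set]) simp_all

lemma enum_index_less:
  assumes "finite A" and "a \<in> A"
  shows "enum_index A a < card A"
proof -
  have "enum_index A a \<in> {..<card A}"
    unfolding enum_index_def
    by (rule bij_betw_apply[OF bij_betw_the_inv_into[OF bij_betw_enum_set]]) (use assms in simp_all)
  then show ?thesis by simp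
qed

lemma enum_set_index: "finite A \<Longrightarrow> a \<in> A \<Longrightarrow> enum_set A (enum_index A a) = a"
  unfolding enum_index_def by (rule f_the_inv_into_f_bij_betw[OF bij_betw_enum_set])

lemma enum_index_set: "finite A \<Longrightarrow> i < card A \<Longrightarrow> enum_index A (enum_set A i) = i"
  unfolding enum_index_def
  by (simp add: the_inv_into_f_f bij_betw_imp_inj_on[OF bij_betw_enum_set])

text \<open>Objects and arrows of the full subcategory of elements on E are numbered by enum_set, since
  fin_cat wants them as natural numbers; an arrow from generator i to generator j is a morphism
  phi with act (gob j) phi (gen j) = gen i.\<close>

locale generating_set =
  fixes Z :: "'a list \<Rightarrow> 'x set" and act :: "'a list \<Rightarrow> 'p morph \<Rightarrow> 'x \<Rightarrow> 'x"
    and E :: "('a list \<times> 'x) set"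
  assumes presheaf: "presheaf Z act"
    and finite_generators: "finite E"
    and generator_in: "(U, x) \<in> E \<Longrightarrow> x \<in> Z U"
    and finite_maps: "(U, x) \<in> E \<Longrightarrow> (V, y) \<in> E \<Longrightarrow> finite {phi \<in> dhom V U. act U phi x = y}"
begin

definition gob :: "nat \<Rightarrow> 'a list" where
  "gob i = fst (enum_set E i)"

definition gen :: "nat \<Rightarrow> 'x" where
  "gen i = snd (enum_set E i)"

definition gen_maps :: "(nat \<times> nat \<times> 'p morph) set" where
  "gen_maps = {(i, j, phi). i < card E \<and> j < card E \<and>
                 phi \<in> dhom (gob i) (gob j) \<and> act (gob j) phi (gen j) = gen i}"

abbreviation arrow :: "nat \<Rightarrow> nat \<Rightarrow> 'p morph \<Rightarrow> nat" where
  "arrow i j phi \<equiv> enum_index gen_maps (i, j, phi)"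

definition src :: "nat \<Rightarrow> nat" where
  "src f = fst (enum_set gen_maps f)"

definition tgt :: "nat \<Rightarrow> nat" where
  "tgt f = fst (snd (enum_set gen_maps f))"

definition gar :: "nat \<Rightarrow> 'p morph" where
  "gar f = snd (snd (enum_set gen_maps f))"

definition ident :: "nat \<Rightarrow> nat" where
  "ident i = arrow i i (did (gob i))"

definition comp :: "nat \<Rightarrow> nat \<Rightarrow> nat" where
  "comp g f = arrow (src f) (tgt g) (dcomp (gar g) (gar f))"

lemma gob_gen_mem:
  "i < card E \<Longrightarrow> (gob i, gen i) \<in> E"
  using enum_set_in[OF finite_generators] by (simp add: gob_def gen_def)

lemma gob_gen_enum_index:
  "(U, x) \<in> E \<Longrightarrow> enum_index E (U, x) < card E \<and> gob (enum_index E (U, x)) = U \<and>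
     gen (enum_index E (U, x)) = x"
  using enum_index_less enum_set_index finite_generators by (fastforce simp: gob_def gen_def)

lemma finite_gen_maps: "finite gen_maps"
proof (rule finite_subset)
  show "gen_maps \<subseteq> (\<Union>i<card E. \<Union>j<card E. Pair i ` Pair j `
          {phi \<in> dhom (gob i) (gob j). act (gob j) phi (gen j) = gen i})"
    unfolding gen_maps_def by blast
  show "finite \<dots>"
    using finite_maps gob_gen_mem by blast
qed

lemma gen_maps_id: "i < card E \<Longrightarrow> (i, i, did (gob i)) \<in> gen_maps"
  by (simp add: gen_maps_def did_in_dhom presheaf_act_did[OF presheaf] generator_in gob_gen_mem)

lemma gen_maps_comp:
  assumes "(i, j, phi) \<in> gen_maps" and "(j, k, psi) \<in> gen_maps"
  shows "(i, k, dcomp psi phi) \<in> gen_maps"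
proof -
  from assms have ijk: "i < card E" "j < card E" "k < card E"
    and phi: "phi \<in> dhom (gob i) (gob j)" and psi: "psi \<in> dhom (gob j) (gob k)"
    and "act (gob j) phi (gen j) = gen i" and "act (gob k) psi (gen k) = gen j"
    by (simp_all add: gen_maps_def)
  then have "act (gob k) (dcomp psi phi) (gen k) = gen i"
    by (simp add: presheaf_act_dcomp[OF presheaf psi phi] generator_in gob_gen_mem)
  with ijk phi psi show ?thesis
    by (simp add: gen_maps_def dcomp_in_dhom)
qed

lemma arrow_in_gen_maps: "f < card gen_maps \<Longrightarrow> (src f, tgt f, gar f) \<in> gen_maps"
  using enum_set_in[OF finite_gen_maps] by (simp add: src_def tgt_def gar_def)

lemma arrow_src_tgt_gar: "f < card gen_maps \<Longrightarrow> arrow (src f) (tgt f) (gar f) = f"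
  using enum_index_set[OF finite_gen_maps] by (simp add: src_def tgt_def gar_def)

lemma arrow_gen_map:
  assumes "(i, j, phi) \<in> gen_maps"
  shows "arrow i j phi < card gen_maps" and "src (arrow i j phi) = i"
    and "tgt (arrow i j phi) = j" and "gar (arrow i j phi) = phi"
  using enum_index_less[OF finite_gen_maps assms] enum_set_index[OF finite_gen_maps assms]
  by (simp_all add: src_def tgt_def gar_def)

lemma fin_cat_gen_maps: "fin_cat {..<card E} {..<card gen_maps} src tgt ident comp"
  unfolding fin_cat_def
proof (intro conjI ballI impI)
  fix f assume "f \<in> {..<card gen_maps}"
  then have f: "(src f, tgt f, gar f) \<in> gen_maps" and idx: "arrow (src f) (tgt f) (gar f) = f"
    by (simp_all add: arrow_in_gen_maps arrow_src_tgt_gar)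
  then show "src f \<in> {..<card E}" and "tgt f \<in> {..<card E}"
    by (auto simp: gen_maps_def)
  from f have Gf: "gar f \<in> dhom (gob (src f)) (gob (tgt f))"
    by (simp add: gen_maps_def)
  have "(src f, src f, did (gob (src f))) \<in> gen_maps" and "(tgt f, tgt f, did (gob (tgt f))) \<in> gen_maps"
    using \<open>src f \<in> {..<card E}\<close> \<open>tgt f \<in> {..<card E}\<close> by (simp_all add: gen_maps_id)
  then show "comp f (ident (src f)) = f" and "comp (ident (tgt f)) f = f"
    by (simp_all add: comp_def ident_def arrow_gen_map dcomp_did_left[OF Gf] dcomp_did_right[OF Gf] idx)
next
  fix i assume "i \<in> {..<card E}"
  then show "ident i \<in> {..<card gen_maps}" and "src (ident i) = i" and "tgt (ident i) = i"
    using gen_maps_id[of i] by (simp_all add: ident_def arrow_gen_map)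
next
  fix f g assume "f \<in> {..<card gen_maps}" and "g \<in> {..<card gen_maps}" and "tgt f = src g"
  then have "(src f, tgt g, dcomp (gar g) (gar f)) \<in> gen_maps"
    using arrow_in_gen_maps gen_maps_comp by fastforce
  then show "comp g f \<in> {..<card gen_maps}" and "src (comp g f) = src f"
    and "tgt (comp g f) = tgt g"
    by (simp_all add: comp_def arrow_gen_map)
next
  fix f g h assume "f \<in> {..<card gen_maps}" and "g \<in> {..<card gen_maps}"
    and "h \<in> {..<card gen_maps}" and fgh: "tgt f = src g \<and> tgt g = src h"
  then have f: "(src f, tgt f, gar f) \<in> gen_maps" and g: "(src g, tgt g, gar g) \<in> gen_maps"
    and h: "(src h, tgt h, gar h) \<in> gen_maps"
    using arrow_in_gen_maps by blast+
  have fg: "(src f, tgt g, dcomp (gar g) (gar f)) \<in> gen_maps"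
    and gh: "(src g, tgt h, dcomp (gar h) (gar g)) \<in> gen_maps"
    using gen_maps_comp f g h fgh by auto
  have "dcomp (gar h) (dcomp (gar g) (gar f)) = dcomp (dcomp (gar h) (gar g)) (gar f)"
    using f g h fgh by (auto simp: gen_maps_def dcomp_assoc)
  then show "comp h (comp g f) = comp (comp h g) f"
    using fg gh by (simp add: comp_def arrow_gen_map)
qed simp_all

lemma is_functor_gen_maps: "is_functor {..<card E} {..<card gen_maps} src tgt ident comp gob gar"
  unfolding is_functor_def
proof (intro conjI ballI impI)
  fix f assume "f \<in> {..<card gen_maps}"
  then show "gar f \<in> dhom (gob (src f)) (gob (tgt f))"
    using arrow_in_gen_maps by (simp add: gen_maps_def)
next
  fix i assume "i \<in> {..<card E}"
  then show "gar (ident i) = did (gob i)"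
    using gen_maps_id by (simp add: ident_def arrow_gen_map)
next
  fix f g assume "f \<in> {..<card gen_maps}" and "g \<in> {..<card gen_maps}" and "tgt f = src g"
  then show "gar (comp g f) = dcomp (gar g) (gar f)"
    using arrow_in_gen_maps gen_maps_comp by (fastforce simp: comp_def arrow_gen_map)
qed

sublocale representable_cocone Z act "{..<card E}" "{..<card gen_maps}" src tgt ident comp gob gar gen
proof
  show "presheaf Z act" by (rule presheaf)
  show "fin_cat {..<card E} {..<card gen_maps} src tgt ident comp" by (rule fin_cat_gen_maps)
  show "is_functor {..<card E} {..<card gen_maps} src tgt ident comp gob gar"
    by (rule is_functor_gen_maps)
  show "i \<in> {..<card E} \<Longrightarrow> gen i \<in> Z (gob i)" for i
    by (simp add: gob_gen_mem generator_in)
  show "f \<in> {..<card gen_maps} \<Longrightarrow> act (gob (tgt f)) (gar f) (gen (tgt f)) = gen (src f)" for f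
    using arrow_in_gen_maps by (simp add: gen_maps_def)
qed

lemma enum_index_gob_gen: "i < card E \<Longrightarrow> enum_index E (gob i, gen i) = i"
  using enum_index_set[OF finite_generators] by (simp add: gob_def gen_def)

lemma colim_step_gen_map:
  assumes "(V, y) \<in> E" and "(U, x) \<in> E" and a: "a \<in> dhom V U" and "act U a x = y"
    and psi: "psi \<in> dhom W V"
  shows "((enum_index E (V, y), psi), (enum_index E (U, x), dcomp a psi))
           \<in> colim_step {..<card gen_maps} src tgt gob gar W"
proof -
  let ?f = "arrow (enum_index E (V, y)) (enum_index E (U, x)) a"
  have "(enum_index E (V, y), enum_index E (U, x), a) \<in> gen_maps"
    using assms gob_gen_enum_index by (simp add: gen_maps_def)
  note f = arrow_gen_map[OF this]
  have "psi \<in> dhom W (gob (src ?f))"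
    using psi f assms gob_gen_enum_index by simp
  with f show ?thesis
    unfolding colim_step_def by (intro CollectI exI[of _ ?f] exI[of _ psi]) simp
qed

context
  fixes cgen :: "'a list \<Rightarrow> 'x \<Rightarrow> 'x" and cmap :: "'a list \<Rightarrow> 'x \<Rightarrow> 'p morph"
  assumes canonical: "\<And>W z. z \<in> Z W \<Longrightarrow>
      (W, cgen W z) \<in> E \<and> cmap W z \<in> dhom W W \<and> act W (cmap W z) (cgen W z) = z"
    and common_refinement: "\<And>U x W phi. (U, x) \<in> E \<Longrightarrow> phi \<in> dhom W U \<Longrightarrow>
      \<exists>y a chi psi. (W, y) \<in> E \<and> a \<in> dhom W U \<and> act U a x = y \<and>
        chi \<in> dhom W W \<and> act W chi (cgen W (act U phi x)) = y \<and>
        psi \<in> dhom W W \<and> dcomp a psi = phi \<and> dcomp chi psi = cmap W (act U phi x)"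
begin

definition canonical_rep :: "'a list \<Rightarrow> 'x \<Rightarrow> nat \<times> 'p morph" where
  "canonical_rep W z = (enum_index E (W, cgen W z), cmap W z)"

lemma canonical_rep_in_fibre:
  "z \<in> Z W \<Longrightarrow> canonical_rep W z \<in> colim_base {..<card E} gob W \<and> eval (canonical_rep W z) = z"
  using canonical gob_gen_enum_index by (simp add: canonical_rep_def colim_base_iff eval_def)

lemma zigzag_to_canonical_rep:
  assumes p_base: "p \<in> colim_base {..<card E} gob W"
  shows "(p, canonical_rep W (eval p)) \<in> (colim_step {..<card gen_maps} src tgt gob gar W \<union>
                                         (colim_step {..<card gen_maps} src tgt gob gar W)\<inverse>)\<^sup>+"
proof -
  obtain i phi where p: "p = (i, phi)"
    by (cases p)
  with p_base have i: "i < card E" and phi: "phi \<in> dhom W (gob i)"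
    by (simp_all add: colim_base_iff)
  have gen_i: "(gob i, gen i) \<in> E"
    using i by (rule gob_gen_mem)
  define z where "z = eval p"
  have z: "z = act (gob i) phi (gen i)" and "z \<in> Z W"
    using eval_in[OF p_base] by (simp_all add: z_def p eval_def)
  obtain y a chi psi where y: "(W, y) \<in> E" and a: "a \<in> dhom W (gob i)"
    and "act (gob i) a (gen i) = y" and chi: "chi \<in> dhom W W" and "act W chi (cgen W z) = y"
    and psi: "psi \<in> dhom W W" and "dcomp a psi = phi" and "dcomp chi psi = cmap W z"
    using common_refinement[OF gen_i phi] unfolding z by blast
  then have "((enum_index E (W, y), psi), p) \<in> colim_step {..<card gen_maps} src tgt gob gar W"
    and "((enum_index E (W, y), psi), canonical_rep W z) \<in> colim_step {..<card gen_maps} src tgt gob gar W"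
    using colim_step_gen_map[OF y gen_i a _ psi] colim_step_gen_map[OF y _ chi _ psi]
      canonical[OF \<open>z \<in> Z W\<close>] enum_index_gob_gen[OF i]
    by (simp_all add: p canonical_rep_def)
  then show ?thesis
    unfolding z_def by (meson UnI1 UnI2 converseI r_into_trancl trancl_trans)
qed

theorem fin_gen_if_canonical_representatives: "fin_gen Z act"
proof (rule fin_gen_if_fibres_connected)
  show "\<exists>p \<in> colim_base {..<card E} gob W. eval p = z" if "z \<in> Z W" for W z
    using canonical_rep_in_fibre[OF that] by blast
  show "(p, q) \<in> colim_equiv {..<card E} {..<card gen_maps} src tgt gob gar W"
    if "p \<in> colim_base {..<card E} gob W" and "q \<in> colim_base {..<card E} gob W"
      and "eval p = eval q" for p q W
  proof -
    let ?T = "(colim_step {..<card gen_maps} src tgt gob gar W \<union>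
               (colim_step {..<card gen_maps} src tgt gob gar W)\<inverse>)\<^sup>+"
    have "sym ?T"
      by (simp add: sym_trancl sym_Un_converse)
    then have "(canonical_rep W (eval p), q) \<in> ?T"
      using zigzag_to_canonical_rep[OF that(2)] that(3) by (metis symD)
    with zigzag_to_canonical_rep[OF that(1)] show ?thesis
      unfolding colim_equiv_def by (meson UnI2 trancl_trans)
  qed
qed

end

end

section \<open>The Petri net presheaf\<close>

lemma X_act_eq:
  "length ts = length xs \<Longrightarrow>
   X_act F U (xs, w) (ts, v) = (retained ts xs, \<lambda>p. v p + w p + face_weight F ts xs p)"
  unfolding X_act_def by (simp add: retained_conv_filter face_weight_conv_sum)

definition X_sub :: "('p \<times> 't + 't \<times> 'p) set \<Rightarrow> ('t \<Rightarrow> 'a) \<Rightarrow> 't list set \<Rightarrow> 'a list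
                     \<Rightarrow> ('t list \<times> ('p \<Rightarrow> nat)) set" where
  "X_sub F lab G U = {x \<in> X_P F lab U. fst x \<in> G}"

lemma X_sub_iff: "(ts, v) \<in> X_sub F lab G U \<longleftrightarrow> map lab ts = U \<and> ts \<in> G"
  by (simp add: X_sub_def X_P_def)

definition subseq_closed :: "'b list set \<Rightarrow> bool" where
  "subseq_closed G \<longleftrightarrow> (\<forall>ts \<in> G. \<forall>ss. subseq ss ts \<longrightarrow> ss \<in> G)"

lemma subseq_closed_retained: "subseq_closed G \<Longrightarrow> ts \<in> G \<Longrightarrow> retained ts xs \<in> G"
  using subseq_retained unfolding subseq_closed_def by blast

lemma presheaf_X_sub:
  fixes F :: "('p \<times> 't + 't \<times> 'p) set"
  assumes "subseq_closed G"
  shows "presheaf (X_sub F lab G) (X_act F)"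
  unfolding presheaf_def
proof (intro conjI allI impI)
  fix U V and phi :: "'p morph" and x assume "phi \<in> dhom V U \<and> x \<in> X_sub F lab G U"
  moreover obtain xs w ts v where "phi = (xs, w)" and "x = (ts, v)"
    by fastforce
  ultimately show "X_act F U phi x \<in> X_sub F lab G V"
    using subseq_closed_retained[OF assms]
    by (auto simp: dhom_iff X_sub_iff X_act_eq map_retained)
next
  fix U x assume "x \<in> X_sub F lab G U"
  moreover obtain ts v where "x = (ts, v)"
    by fastforce
  ultimately show "X_act F U (did U) x = x"
    by (auto simp: did_def X_sub_iff X_act_eq retained_replicate_None face_weight_replicate_None)
next
  fix U V W and phi psi :: "'p morph" and x assume "phi \<in> dhom V U \<and> psi \<in> dhom W V \<and> x \<in> X_sub F lab G U"
  moreover obtain xs w ys w' ts v where "phi = (xs, w)" and "psi = (ys, w')" and "x = (ts, v)"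
    by (metis surj_pair)
  ultimately show "X_act F U (dcomp phi psi) x = X_act F V psi (X_act F U phi x)"
    by (auto simp: dhom_iff X_sub_iff dcomp_def X_act_eq length_fill length_retained
                   retained_fill face_weight_fill fun_eq_iff)
qed

lemma finite_bounded_funs: "finite {v :: 'p::finite \<Rightarrow> nat. \<forall>p. v p \<le> b p}"
proof (rule finite_subset)
  show "{v. \<forall>p. v p \<le> b p} \<subseteq> (\<Pi>\<^sub>E p \<in> UNIV. {..b p})"
    by auto
qed (simp add: finite_PiE)

lemma finite_X_act_solutions:
  fixes F :: "('p::finite \<times> 't + 't \<times> 'p) set"
  assumes "length ts = length U"
  shows "finite {phi \<in> dhom V U. X_act F U phi (ts, v) = y}"
proof (rule finite_subset)
  show "{phi \<in> dhom V U. X_act F U phi (ts, v) = y} \<subseteq>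
        {xs. set xs \<subseteq> UNIV \<and> length xs \<le> length U} \<times> {w. \<forall>p. w p \<le> snd y p}"
    using assms by (auto simp: dhom_iff X_act_eq)
  show "finite ({xs :: bool option list. set xs \<subseteq> UNIV \<and> length xs \<le> length U} \<times>
                {w. \<forall>p. w p \<le> snd y p})"
    by (rule finite_cartesian_product[OF finite_lists_length_le[OF finite_UNIV] finite_bounded_funs])
qed

definition X_generators :: "('t \<Rightarrow> 'a) \<Rightarrow> 't list set \<Rightarrow> nat
                            \<Rightarrow> ('a list \<times> ('t list \<times> ('p \<Rightarrow> nat))) set" where
  "X_generators lab G L = {(map lab ts, (ts, v)) | ts v. ts \<in> G \<and> (\<forall>p. v p + length ts \<le> L)}"

lemma X_generators_iff:
  "(U, (ts, v)) \<in> X_generators lab G L \<longleftrightarrow> U = map lab ts \<and> ts \<in> G \<and> (\<forall>p. v p + length ts \<le> L)"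
  by (auto simp: X_generators_def)

lemma finite_X_generators:
  assumes "finite G"
  shows "finite (X_generators lab G L :: ('a list \<times> ('t list \<times> ('p::finite \<Rightarrow> nat))) set)"
proof (rule finite_subset)
  show "X_generators lab G L \<subseteq> (\<lambda>(ts, v). (map lab ts, (ts, v))) ` (G \<times> {v :: 'p \<Rightarrow> nat. \<forall>p. v p \<le> L})"
  proof
    fix e assume "e \<in> X_generators lab G L"
    then obtain ts v where e: "e = (map lab ts, (ts, v))" and "ts \<in> G"
      and "\<forall>p. v p + length ts \<le> L"
      by (auto simp: X_generators_def)
    then have "(ts, v) \<in> G \<times> {v. \<forall>p. v p \<le> L}"
      by (auto intro: le_trans[OF le_add1])
    then show "e \<in> (\<lambda>(ts, v). (map lab ts, (ts, v))) ` (G \<times> {v. \<forall>p. v p \<le> L})"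
      by (force simp: e)
  qed
  show "finite \<dots>"
    by (rule finite_imageI[OF finite_cartesian_product[OF assms finite_bounded_funs]])
qed

lemma X_generators_face:
  assumes "(U, (ts, v)) \<in> X_generators lab G L" and "subseq_closed G" and "length xs = length ts"
  shows "(retained U xs, (retained ts xs, \<lambda>p. v p + face_weight F ts xs p)) \<in> X_generators lab G L"
proof -
  have "v p + length ts \<le> L" for p
    using assms(1) by (simp add: X_generators_iff)
  then have "v p + face_weight F ts xs p + length (retained ts xs) \<le> L" for p
    using face_weight_add_length_retained[of F ts xs p] by (metis add.assoc add_left_mono le_trans)
  with assms show ?thesis
    by (simp add: X_generators_iff map_retained subseq_closed_retained)
qed

lemma generating_set_X_generators:
  fixes F :: "('p::finite \<times> 't + 't \<times> 'p) set"
  assumes "subseq_closed G" and "finite G"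
  shows "generating_set (X_sub F lab G) (X_act F) (X_generators lab G L)"
proof
  show "presheaf (X_sub F lab G) (X_act F)"
    using assms(1) by (rule presheaf_X_sub)
  show "finite (X_generators lab G L :: ('a list \<times> 't list \<times> ('p \<Rightarrow> nat)) set)"
    using assms(2) by (rule finite_X_generators)
  show "x \<in> X_sub F lab G U" if "(U, x) \<in> X_generators lab G L" for U x
    using that by (cases x) (simp add: X_generators_iff X_sub_iff)
  show "finite {phi \<in> dhom V U. X_act F U phi x = y}" if "(U, x) \<in> X_generators lab G L" for U x V y
  proof (cases x)
    case (Pair ts v)
    with that show ?thesis
      by (simp add: X_generators_iff finite_X_act_solutions)
  qed
qed

definition translation :: "'a list \<Rightarrow> ('p \<Rightarrow> nat) \<Rightarrow> 'p morph" where
  "translation U w = (replicate (length U) None, w)"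

lemma translation_in_dhom: "translation U w \<in> dhom U U"
  by (simp add: translation_def dhom_iff retained_replicate_None)

lemma X_act_translation:
  "length ts = length U \<Longrightarrow> X_act F U (translation U w) (ts, v) = (ts, \<lambda>p. v p + w p)"
  by (simp add: translation_def X_act_eq retained_replicate_None face_weight_replicate_None)

lemma X_generators_canonical:
  assumes length_le: "\<And>ts. ts \<in> G \<Longrightarrow> length ts \<le> L" and z: "z \<in> X_sub F lab G W"
  shows "(W, (fst z, \<lambda>_. 0)) \<in> X_generators lab G L \<and> translation W (snd z) \<in> dhom W W \<and>
         X_act F W (translation W (snd z)) (fst z, \<lambda>_. 0) = z"
  using z length_le by (cases z) (auto simp: X_sub_iff X_generators_iff translation_in_dhom X_act_translation)

lemma X_generators_common_refinement:
  fixes F :: "('p \<times> 't + 't \<times> 'p) set" and phi :: "'p morph"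
  assumes closed: "subseq_closed G" and x: "(U, x) \<in> X_generators lab G L"
    and phi: "phi \<in> dhom W U"
  shows "\<exists>y a chi psi. (W, y) \<in> X_generators lab G L \<and> a \<in> dhom W U \<and> X_act F U a x = y \<and>
           chi \<in> dhom W W \<and> X_act F W chi (fst (X_act F U phi x), \<lambda>_. 0) = y \<and>
           psi \<in> dhom W W \<and> dcomp a psi = phi \<and>
           dcomp chi psi = translation W (snd (X_act F U phi x))"
proof -
  obtain ts v where x_eq: "x = (ts, v)" by fastforce
  obtain xs w where phi_eq: "phi = (xs, w)" by fastforce
  have U: "U = map lab ts"
    using x by (simp add: x_eq X_generators_iff)
  have lengths: "length xs = length ts" and W: "W = retained U xs"
    using phi by (simp_all add: phi_eq dhom_iff U)
  then have length_W: "length W = dom_length xs" and "length (retained ts xs) = length W"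
    by (simp_all add: U length_retained)
  define y where "y = (retained ts xs, \<lambda>p. v p + face_weight F ts xs p)"
  have act_phi: "X_act F U phi x = (retained ts xs, \<lambda>p. v p + w p + face_weight F ts xs p)"
    using lengths by (simp add: phi_eq x_eq X_act_eq)
  show ?thesis
  proof (intro exI conjI)
    show "(W, y) \<in> X_generators lab G L"
      using X_generators_face[OF x[unfolded x_eq] closed lengths] by (simp add: W y_def)
    show "(xs, \<lambda>_. 0) \<in> dhom W U"
      using lengths by (simp add: dhom_iff U W)
    show "X_act F U (xs, \<lambda>_. 0) x = y"
      using lengths by (simp add: x_eq y_def X_act_eq)
    show "X_act F W (translation W (\<lambda>p. v p + face_weight F ts xs p)) (fst (X_act F U phi x), \<lambda>_. 0) = y"
      using \<open>length (retained ts xs) = length W\<close> by (simp add: act_phi y_def X_act_translation)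
    show "dcomp (xs, \<lambda>_. 0) (translation W w) = phi"
      by (simp add: dcomp_def translation_def phi_eq length_W fill_replicate_None_right)
    show "dcomp (translation W (\<lambda>p. v p + face_weight F ts xs p)) (translation W w) =
          translation W (snd (X_act F U phi x))"
      by (simp add: dcomp_def translation_def act_phi fill_replicate_None_left fun_eq_iff)
  qed (rule translation_in_dhom)+
qed

theorem fin_gen_X_sub:
  fixes F :: "('p::finite \<times> 't + 't \<times> 'p) set"
  assumes closed: "subseq_closed G" and "finite G"
  shows "fin_gen (X_sub F lab G) (X_act F)"
proof -
  define L where "L = Max (insert 0 (length ` G))"
  have length_le: "length ts \<le> L" if "ts \<in> G" for ts
    using that \<open>finite G\<close> by (simp add: L_def)
  interpret generating_set "X_sub F lab G" "X_act F" "X_generators lab G L"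
    using assms by (rule generating_set_X_generators)
  show ?thesis
  proof (rule fin_gen_if_canonical_representatives
      [where cgen = "\<lambda>W z. (fst z, \<lambda>_. 0)" and cmap = "\<lambda>W z. translation W (snd z)"])
    show "\<And>W z. z \<in> X_sub F lab G W \<Longrightarrow> (W, fst z, \<lambda>_. 0) \<in> X_generators lab G L \<and>
            translation W (snd z) \<in> dhom W W \<and> X_act F W (translation W (snd z)) (fst z, \<lambda>_. 0) = z"
      using length_le by (rule X_generators_canonical)
    show "\<And>U x W phi. (U, x) \<in> X_generators lab G L \<Longrightarrow> phi \<in> dhom W U \<Longrightarrow>
            \<exists>y a chi psi. (W, y) \<in> X_generators lab G L \<and> a \<in> dhom W U \<and> X_act F U a x = y \<and>
              chi \<in> dhom W W \<and> X_act F W chi (fst (X_act F U phi x), \<lambda>_. 0) = y \<and>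
              psi \<in> dhom W W \<and> dcomp a psi = phi \<and> dcomp chi psi = translation W (snd (X_act F U phi x))"
      using closed by (rule X_generators_common_refinement)
  qed
qed

lemma X_nac_eq_X_sub: "X_nac F lab = X_sub F lab {ts. distinct ts}"
  by (auto simp: fun_eq_iff X_nac_def X_sub_def)

lemma X_le_eq_X_sub: "X_le F lab d = X_sub F lab {ts. length ts \<le> d}"
  by (auto simp: fun_eq_iff X_le_def X_sub_def)

lemma subseq_closed_distinct: "subseq_closed {ts. distinct ts}"
  by (auto simp: subseq_closed_def subseq_conv_nths)

lemma subseq_closed_length_le: "subseq_closed {ts. length ts \<le> d}"
  by (auto simp: subseq_closed_def dest: list_emb_length)

theorem proposition17:
  fixes F :: "('p::finite \<times> 't::finite + 't \<times> 'p) set"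
    and lab :: "'t \<Rightarrow> 'a"
    and d :: nat
  assumes "d \<ge> 1"
  shows "fin_gen (X_nac F lab) (X_act F) \<and> fin_gen (X_le F lab d) (X_act F) \<and>
         (\<forall>S A. finite S \<and> finite A \<and> S \<subseteq> elems (X_nac F lab) \<and> A \<subseteq> elems (X_nac F lab)
                \<longrightarrow> hdac_finite_type (X_nac F lab) (X_act F) S A) \<and>
         (\<forall>S A. finite S \<and> finite A \<and> S \<subseteq> elems (X_le F lab d) \<and> A \<subseteq> elems (X_le F lab d)
                \<longrightarrow> hdac_finite_type (X_le F lab d) (X_act F) S A)"
proof -
  have "finite {ts :: 't list. distinct ts}"
    using finite_subset_distinct[of "UNIV :: 't set"] by simp
  then have nac: "fin_gen (X_nac F lab) (X_act F)"
    unfolding X_nac_eq_X_sub by (rule fin_gen_X_sub[OF subseq_closed_distinct])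
  have "finite {ts :: 't list. length ts \<le> d}"
    using finite_lists_length_le[of "UNIV :: 't set" d] by simp
  then have le: "fin_gen (X_le F lab d) (X_act F)"
    unfolding X_le_eq_X_sub by (rule fin_gen_X_sub[OF subseq_closed_length_le])
  show ?thesis
    using nac le by (simp add: hdac_finite_type_def)
qed

end
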